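(* Let $A\in\mathcal{C}_n$ have unit diagonal. Let $I_1,\dots,I_m$ be the elements of $\mathcal{I}=\operatorname{Supp}(\mathcal{M}(A))$ ordered by nondecreasing cardinality (each has cardinality at least 2), and let $m_2$ be the number with cardinality 2. Let $G_2(\mathcal{I})$ be the graph with vertex set $\{1,\dots,n\}$ and edges $I_1,\dots,I_{m_2}$, and let $G_{>2}(\mathcal{I})$ be the bipartite graph with vertex classes $V=\{1,\dots,n\}$, $W=\{m_2+1,\dots,m\}$, in which $(v,w)\in V\times W$ is an edge iff $v\in I_w$. Let $G_{2,1},\dots,G_{2,r}$ be the connected components of $G_2(\mathcal{I})$ which are bipartite. If the linear span of $\mathcal{M}(A)$ is $\mathbb{R}^n$, then there exist edges $(v_1,w_1),\dots,(v_r,w_r)$ of $G_{>2}(\mathcal{I})$ such that $v_j$ is a vertex of $G_{2,j}$ for all $j=1,\dots,r$ and $w_1,\dots,w_r$ are mutually different.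
   Context: $\mathcal{C}_n$ denotes the cone of copositive matrices: real symmetric $n\times n$ matrices $A$ with $x^TAx\ge 0$ for all $x\in\mathbb{R}^n_+$. A zero of $A$ is a nonzero $u\in\mathbb{R}^n_+$ with $u^TAu=0$; $\operatorname{Supp}(u)=\{i:u_i\ne0\}$; a zero $u$ is minimal if there is no zero $v$ with $\operatorname{Supp}(v)\subsetneq\operatorname{Supp}(u)$; $\mathcal{M}(A)$ is the set of minimal zeros and $\operatorname{Supp}(\mathcal{M}(A))=\{\operatorname{Supp}(u):u\in\mathcal{M}(A)\}$. *)

theory Defs
  imports "HOL-Analysis.Analysis"
begin

definition copositive :: "real^'n^'n \<Rightarrow> bool" where
  "copositive A \<longleftrightarrow> transpose A = A \<and>
     (\<forall>x::real^'n. (\<forall>i. 0 \<le> x$i) \<longrightarrow> 0 \<le> x \<bullet> (A *v x))"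

definition supp :: "real^'n \<Rightarrow> 'n set" where
  "supp u = {i. u$i \<noteq> 0}"

definition is_zero :: "real^'n^'n \<Rightarrow> real^'n \<Rightarrow> bool" where
  "is_zero A u \<longleftrightarrow> u \<noteq> 0 \<and> (\<forall>i. 0 \<le> u$i) \<and> u \<bullet> (A *v u) = 0"

definition minimal_zeros :: "real^'n^'n \<Rightarrow> (real^'n) set" where
  "minimal_zeros A = {u. is_zero A u \<and> \<not> (\<exists>v. is_zero A v \<and> supp v \<subset> supp u)}"

definition supp_minimal_zeros :: "real^'n^'n \<Rightarrow> 'n set set" where
  "supp_minimal_zeros A = supp ` minimal_zeros A"

definition G2_adj :: "'n set set \<Rightarrow> 'n \<Rightarrow> 'n \<Rightarrow> bool" where
  "G2_adj \<I> i j \<longleftrightarrow> {i, j} \<in> \<I> \<and> card {i, j} = 2"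

definition G2_component :: "'n set set \<Rightarrow> 'n \<Rightarrow> 'n set" where
  "G2_component \<I> v = {u. (G2_adj \<I>)\<^sup>*\<^sup>* v u}"

definition G2_components :: "'n set set \<Rightarrow> 'n set set" where
  "G2_components \<I> = range (G2_component \<I>)"

definition G2_bipartite :: "'n set set \<Rightarrow> 'n set \<Rightarrow> bool" where
  "G2_bipartite \<I> C \<longleftrightarrow> (\<exists>c :: 'n \<Rightarrow> bool.
      \<forall>i\<in>C. \<forall>j\<in>C. G2_adj \<I> i j \<longrightarrow> c i \<noteq> c j)"

definition G2_bipartite_components :: "'n set set \<Rightarrow> 'n set set" where
  "G2_bipartite_components \<I> = {C \<in> G2_components \<I>. G2_bipartite \<I> C}"

end

theory Submission
  imports Defs
begin

(* The proof is Hall's marriage theorem applied to the bipartite components and their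
   neighbourhoods in G_{>2}.  Hall's condition comes from a dimension count: a bipartite
   component C carries a signed indicator vector z_C (+1/-1 on the two colour classes).
   Minimal zeros supported on an edge {i,j} of G_2 have equal entries at i and j, so z_C
   is orthogonal to all minimal zeros except those whose support has cardinality > 2
   and meets C.  As minimal zeros with equal supports are proportional, a set S of
   components with neighbourhood M satisfies card S <= card M. *)

definition hall_condition :: "'a set \<Rightarrow> ('a \<Rightarrow> 'b set) \<Rightarrow> bool" where
  "hall_condition K N \<longleftrightarrow> (\<forall>S\<subseteq>K. card S \<le> card (\<Union>(N ` S)))"

lemma hall_remove_element:
  assumes finK: "finite K" and finN: "\<forall>C\<in>K. finite (N C)" and a: "a \<in> K"
    and slack: "\<And>S. S \<noteq> {} \<Longrightarrow> S \<subset> K \<Longrightarrow> card S < card (\<Union>(N ` S))"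
  shows "hall_condition (K - {a}) (\<lambda>C. N C - {x})"
  unfolding hall_condition_def
proof (intro allI impI)
  fix S assume S: "S \<subseteq> K - {a}"
  show "card S \<le> card (\<Union>C\<in>S. N C - {x})"
  proof (cases "S = {}")
    case False
    have "S \<subset> K" using S a by auto
    then have "card S < card (\<Union>(N ` S))" using slack False by blast
    moreover have "(\<Union>C\<in>S. N C - {x}) = \<Union>(N ` S) - {x}" by auto
    moreover have "finite (\<Union>(N ` S))" using finK finN S by (auto intro: finite_subset)
    ultimately show ?thesis by (simp add: card_Diff_singleton_if) linarith
  qed simp
qed

lemma hall_remove_tight:
  assumes finK: "finite K" and finN: "\<forall>C\<in>K. finite (N C)" and hall: "hall_condition K N"
    and S0: "S0 \<subseteq> K" "card S0 = card (\<Union>(N ` S0))"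
  shows "hall_condition (K - S0) (\<lambda>C. N C - \<Union>(N ` S0))"
  unfolding hall_condition_def
proof (intro allI impI)
  fix T assume T: "T \<subseteq> K - S0"
  let ?M0 = "\<Union>(N ` S0)" and ?N2 = "\<lambda>C. N C - \<Union>(N ` S0)"
  have finU: "\<And>S. S \<subseteq> K \<Longrightarrow> finite (\<Union>(N ` S))"
    using finK finN by (meson finite_UN_I finite_subset subsetD)
  have fin: "finite T" "finite S0" "finite (\<Union>(N ` T))" "finite ?M0"
    using T S0(1) finK finU by (auto intro: finite_subset)
  have "T \<inter> S0 = {}" using T by blast
  then have "card T + card S0 = card (T \<union> S0)" using fin by (simp add: card_Un_disjoint)
  also have "\<dots> \<le> card (\<Union>(N ` (T \<union> S0)))"
    using hall T S0(1) unfolding hall_condition_def by blast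
  also have "\<Union>(N ` (T \<union> S0)) = \<Union>(?N2 ` T) \<union> ?M0" by auto
  also have "card \<dots> = card (\<Union>(?N2 ` T)) + card ?M0"
    using fin by (intro card_Un_disjoint) auto
  finally show "card T \<le> card (\<Union>(?N2 ` T))" using S0(2) by simp
qed

lemma sdr_insert:
  assumes a: "a \<in> K" and x: "x \<in> N a"
    and f: "inj_on f (K - {a})" "\<forall>C\<in>K - {a}. f C \<in> N C - {x}"
  shows "\<exists>g. inj_on g K \<and> (\<forall>C\<in>K. g C \<in> N C)"
proof -
  have "inj_on (f(a := x)) (insert a (K - {a}))" using f by (auto simp: inj_on_def)
  moreover have "insert a (K - {a}) = K" using a by blast
  ultimately show ?thesis using f x by (intro exI[of _ "f(a := x)"]) auto
qed

lemma sdr_union: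
  assumes f1: "inj_on f1 S0" "\<forall>C\<in>S0. f1 C \<in> N C"
    and f2: "inj_on f2 (K - S0)" "\<forall>C\<in>K - S0. f2 C \<in> N C - \<Union>(N ` S0)"
    and S0: "S0 \<subseteq> K"
  shows "\<exists>g. inj_on g K \<and> (\<forall>C\<in>K. g C \<in> N C)"
proof -
  define g where "g = (\<lambda>C. if C \<in> S0 then f1 C else f2 C)"
  have "inj_on g S0" using f1(1) by (simp add: g_def cong: inj_on_cong)
  moreover have "inj_on g (K - S0) \<longleftrightarrow> inj_on f2 (K - S0)" by (rule inj_on_cong) (simp add: g_def)
  moreover have "g ` S0 \<inter> g ` (K - S0) = {}" using f1(2) f2(2) by (force simp: g_def)
  ultimately have "inj_on g (S0 \<union> (K - S0))"
    unfolding inj_on_Un using f2(1) by (simp add: Diff_triv Int_Diff_disjoint)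
  moreover have "S0 \<union> (K - S0) = K" using S0 by blast
  ultimately show ?thesis using f1 f2 by (intro exI[of _ g]) (auto simp: g_def)
qed

theorem hall_marriage:
  assumes "finite K" "\<forall>C\<in>K. finite (N C)" "hall_condition K N"
  shows "\<exists>f. inj_on f K \<and> (\<forall>C\<in>K. f C \<in> N C)"
  using assms
proof (induction "card K" arbitrary: K N rule: less_induct)
  case less
  note finK = less.prems(1) and finN = less.prems(2) and hall = less.prems(3)
  show ?case
  proof (cases "\<exists>S0. S0 \<noteq> {} \<and> S0 \<subset> K \<and> card S0 = card (\<Union>(N ` S0))")
    case False
    show ?thesis
    proof (cases "K = {}")
      case False
      then obtain a where a: "a \<in> K" by blast
      have slack: "\<And>S. S \<noteq> {} \<Longrightarrow> S \<subset> K \<Longrightarrow> card S < card (\<Union>(N ` S))"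
        using \<open>\<not> (\<exists>S0. _)\<close> hall unfolding hall_condition_def by (meson le_neq_implies_less psubset_imp_subset)
      have "card {a} \<le> card (\<Union>(N ` {a}))" using hall a unfolding hall_condition_def by blast
      then obtain x where x: "x \<in> N a" by fastforce
      have "\<exists>f. inj_on f (K - {a}) \<and> (\<forall>C\<in>K - {a}. f C \<in> N C - {x})"
        using hall_remove_element[OF finK finN a slack, where x=x] finK finN
        by (intro less.hyps[OF card_Diff1_less[OF finK a]]) auto
      then obtain f where "inj_on f (K - {a})" "\<forall>C\<in>K - {a}. f C \<in> N C - {x}" by blast
      then show ?thesis by (rule sdr_insert[where N = N, OF a x])
    qed simp
  next
    case True
    then obtain S0 where S0: "S0 \<noteq> {}" "S0 \<subset> K" "card S0 = card (\<Union>(N ` S0))" by blast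
    have "hall_condition S0 N" using hall S0(2) unfolding hall_condition_def by auto
    then have "\<exists>f. inj_on f S0 \<and> (\<forall>C\<in>S0. f C \<in> N C)"
      using S0(2) finK finN by (intro less.hyps[OF psubset_card_mono[OF finK S0(2)]]) (auto intro: finite_subset)
    then obtain f1 where f1: "inj_on f1 S0" "\<forall>C\<in>S0. f1 C \<in> N C" by blast
    have "K - S0 \<subset> K" using S0(1,2) by blast
    then have "\<exists>f. inj_on f (K - S0) \<and> (\<forall>C\<in>K - S0. f C \<in> N C - \<Union>(N ` S0))"
      using hall_remove_tight[OF finK finN hall _ S0(3)] S0(2) finK finN
      by (intro less.hyps[OF psubset_card_mono[OF finK]]) auto
    then obtain f2 where "inj_on f2 (K - S0)" "\<forall>C\<in>K - S0. f2 C \<in> N C - \<Union>(N ` S0)" by blast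
    then show ?thesis using S0(2) by (intro sdr_union[OF f1]) auto
  qed
qed

(* Dimension count: if U together with a finite set R spans the whole space, then an
   independent set Z orthogonal to U has at most card R elements, since
   dim U >= DIM - card R while U lies in the orthogonal complement of span Z. *)
lemma card_independent_orthogonal_le:
  fixes U R Z :: "'a::euclidean_space set"
  assumes span: "span (U \<union> R) = UNIV" and finR: "finite R" and indep: "independent Z"
    and orth: "\<And>z u. z \<in> Z \<Longrightarrow> u \<in> U \<Longrightarrow> orthogonal z u"
  shows "card Z \<le> card R"
proof -
  obtain B where B: "B \<subseteq> U" "independent B" "U \<subseteq> span B" "card B = dim U"
    by (rule basis_exists)
  have "U \<union> R \<subseteq> span (B \<union> R)"
    using B(3) span_mono[of B "B \<union> R"] span_superset[of "B \<union> R"] by blast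
  then have "dim (U \<union> R) \<le> card (B \<union> R)"
    using finR finiteI_independent[OF B(2)] by (intro dim_le_card) auto
  also have "\<dots> \<le> dim U + card R" using B(4) card_Un_le[of B R] by simp
  finally have spanning: "DIM('a) \<le> dim U + card R"
    using dim_span[of "U \<union> R"] span by simp
  let ?P = "span Z"
  have "dim {y \<in> UNIV. \<forall>x \<in> ?P. orthogonal x y} + dim ?P = dim (UNIV :: 'a set)"
    by (rule dim_subspace_orthogonal_to_vectors) (auto simp: subspace_span)
  then have complement: "dim {y \<in> UNIV. \<forall>x \<in> ?P. orthogonal x y} + card Z = DIM('a)"
    using dim_span_eq_card_independent[OF indep] by simp
  have "U \<subseteq> {y \<in> UNIV. \<forall>x \<in> ?P. orthogonal x y}"
    using orth orthogonal_to_span orthogonal_commute by blast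
  then have "dim U \<le> dim {y \<in> UNIV. \<forall>x \<in> ?P. orthogonal x y}" by (rule dim_subset)
  then show ?thesis using spanning complement by linarith
qed

lemma quadratic_form_add:
  fixes A :: "real^'n^'n"
  assumes "transpose A = A"
  shows "(x + y) \<bullet> (A *v (x + y)) = x \<bullet> (A *v x) + 2 * (y \<bullet> (A *v x)) + y \<bullet> (A *v y)"
proof -
  have "x \<bullet> (A *v y) = y \<bullet> (A *v x)"
    using dot_lmul_matrix[of x A y] vector_transpose_matrix[of x A] assms by (simp add: inner_commute)
  then show ?thesis by (simp add: matrix_vector_right_distrib inner_add_left inner_add_right)
qed

lemma inner_supp:
  fixes x y :: "real^'n"
  assumes "supp x \<subseteq> J"
  shows "y \<bullet> x = (\<Sum>i\<in>J. y$i * x$i)"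
proof -
  have "y \<bullet> x = (\<Sum>i\<in>UNIV. y$i * x$i)" by (simp add: inner_vec_def)
  also have "\<dots> = (\<Sum>i\<in>J. y$i * x$i)"
    by (rule sum.mono_neutral_right) (use assms in \<open>auto simp: supp_def\<close>)
  finally show ?thesis .
qed

lemma matrix_vector_supp:
  fixes x :: "real^'n"
  assumes "supp x \<subseteq> J"
  shows "(A *v x)$i = (\<Sum>l\<in>J. A$i$l * x$l)"
  using inner_supp[OF assms, of "row i A"] by (simp add: matrix_vector_mult_def inner_vec_def row_def)

lemma inner_disjoint_supp:
  fixes x y :: "real^'n"
  assumes "supp x \<inter> supp y = {}"
  shows "x \<bullet> y = 0"
  using inner_supp[of y "supp y" x] assms by (auto simp: supp_def intro!: sum.neutral)

lemma zero_supp_nonempty: "is_zero A u \<Longrightarrow> supp u \<noteq> {}"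
  unfolding is_zero_def supp_def by (auto simp: vec_eq_iff)

lemma zero_pos_on_supp: "is_zero A u \<Longrightarrow> i \<in> supp u \<Longrightarrow> 0 < u$i"
  unfolding is_zero_def supp_def by (auto simp: less_le)

(* First-order optimality at a zero u of a copositive matrix: A u >= 0.  Otherwise
   moving from u a little along a coordinate axis with (A u)_k < 0 would produce a
   nonnegative vector with negative quadratic form. *)
lemma copositive_zero_gradient_nonneg:
  fixes A :: "real^'n^'n"
  assumes cop: "copositive A" and z: "is_zero A u"
  shows "0 \<le> (A *v u)$k"
proof (rule ccontr)
  define b where "b = (A *v u)$k"
  define a where "a = A$k$k"
  assume "\<not> 0 \<le> (A *v u)$k"
  then have b: "b < 0" by (simp add: b_def)
  have sym: "transpose A = A" and nonneg: "\<And>x. \<forall>i. 0 \<le> x$i \<Longrightarrow> 0 \<le> x \<bullet> (A *v x)"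
    using cop unfolding copositive_def by blast+
  have e: "axis k 1 \<bullet> (A *v axis k 1) = a"
    by (simp add: a_def matrix_vector_mult_basis column_def inner_axis')
  have a: "0 \<le> a" using nonneg[of "axis k 1"] e by (simp add: axis_def)
  define t where "t = - b / (a + 1)"
  have t: "0 < t" using a b unfolding t_def by (intro divide_pos_pos) auto
  have "t * a = - b * (a / (a + 1))" using a by (simp add: t_def field_simps)
  also have "\<dots> \<le> - b" using a b by (intro mult_left_le) auto
  finally have "2 * t * b + t\<^sup>2 * a = t * (2 * b + t * a)" "2 * b + t * a < 0"
    using b by (auto simp: power2_eq_square algebra_simps)
  then have neg: "2 * t * b + t\<^sup>2 * a < 0" using t by (simp add: mult_pos_neg)
  define y where "y = t *\<^sub>R axis k (1::real)"
  have "(u + y) \<bullet> (A *v (u + y)) = u \<bullet> (A *v u) + 2 * (y \<bullet> (A *v u)) + y \<bullet> (A *v y)"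
    by (rule quadratic_form_add[OF sym])
  also have "\<dots> = 2 * t * b + t\<^sup>2 * a"
    using z e by (simp add: y_def b_def is_zero_def inner_axis' power2_eq_square matrix_vector_mult_scaleR)
  finally have "(u + y) \<bullet> (A *v (u + y)) < 0" using neg by simp
  moreover have "\<forall>i. 0 \<le> (u + y)$i"
    using z t unfolding is_zero_def y_def axis_def by auto
  ultimately show False using nonneg by fastforce
qed

(* Complementary slackness: u^T (A u) = 0 with both factors nonnegative forces
   (A u)_k = 0 on the support of u. *)
lemma copositive_zero_gradient_vanishes:
  fixes A :: "real^'n^'n"
  assumes cop: "copositive A" and z: "is_zero A u" and k: "k \<in> supp u"
  shows "(A *v u)$k = 0"
proof -
  have nonneg: "\<And>i. 0 \<le> u$i * (A *v u)$i"
    using z copositive_zero_gradient_nonneg[OF cop z] unfolding is_zero_def by simp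
  have "(\<Sum>i\<in>UNIV. u$i * (A *v u)$i) = 0" using z unfolding is_zero_def by (simp add: inner_vec_def)
  then have "u$k * (A *v u)$k = 0" using nonneg by (simp add: sum_nonneg_eq_0_iff)
  then show ?thesis using k by (simp add: supp_def)
qed

lemma copositive_zero_orthogonal_gradient:
  fixes A :: "real^'n^'n"
  assumes cop: "copositive A" and z: "is_zero A u" and s: "supp v \<subseteq> supp u"
  shows "v \<bullet> (A *v u) = 0"
  using inner_supp[OF s, of "A *v u"] copositive_zero_gradient_vanishes[OF cop z]
  by (simp add: inner_commute)

lemma copositive_zero_line:
  fixes A :: "real^'n^'n"
  assumes cop: "copositive A" and zu: "is_zero A u" and zv: "is_zero A v"
    and s: "supp v \<subseteq> supp u"
  shows "(u + c *\<^sub>R v) \<bullet> (A *v (u + c *\<^sub>R v)) = 0"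
proof -
  have sym: "transpose A = A" using cop unfolding copositive_def by blast
  have "v \<bullet> (A *v u) = 0" by (rule copositive_zero_orthogonal_gradient[OF cop zu s])
  then show ?thesis
    using zu zv by (simp add: quadratic_form_add[OF sym] is_zero_def matrix_vector_mult_scaleR)
qed

(* Two minimal zeros with the same support are proportional: subtracting the largest
   multiple of v that keeps u - t v nonnegative yields a zero with strictly smaller
   support, which must therefore vanish. *)
lemma minimal_zeros_same_supp_parallel:
  fixes A :: "real^'n^'n"
  assumes cop: "copositive A" and u: "u \<in> minimal_zeros A" and v: "v \<in> minimal_zeros A"
    and s: "supp u = supp v"
  shows "\<exists>t. u = t *\<^sub>R v"
proof -
  have zu: "is_zero A u" and zv: "is_zero A v"
    and minu: "\<And>w. is_zero A w \<Longrightarrow> \<not> supp w \<subset> supp u"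
    using u v unfolding minimal_zeros_def by auto
  have "supp v \<noteq> {}" by (rule zero_supp_nonempty[OF zv])
  have pos: "\<And>i. i \<in> supp v \<Longrightarrow> 0 < u$i \<and> 0 < v$i"
    using zero_pos_on_supp[OF zu] zero_pos_on_supp[OF zv] s by simp
  define t where "t = Min ((\<lambda>i. u$i / v$i) ` supp v)"
  have "t \<in> (\<lambda>i. u$i / v$i) ` supp v"
    unfolding t_def by (rule Min_in) (use \<open>supp v \<noteq> {}\<close> in auto)
  then obtain i0 where i0: "i0 \<in> supp v" "t = u$i0 / v$i0" by blast
  define w where "w = u + (- t) *\<^sub>R v"
  have w_nonneg: "\<forall>i. 0 \<le> w$i"
  proof
    fix i show "0 \<le> w$i"
    proof (cases "i \<in> supp v")
      case True
      then have "t \<le> u$i / v$i" unfolding t_def by simp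
      then show ?thesis using pos[OF True] by (simp add: w_def le_divide_eq)
    next
      case False
      then have "u$i = 0" "v$i = 0" using s by (auto simp: supp_def)
      then show ?thesis by (simp add: w_def)
    qed
  qed
  have "\<And>i. i \<notin> supp u \<Longrightarrow> u$i = 0 \<and> v$i = 0" using s unfolding supp_def by blast
  then have "supp w \<subseteq> supp u" by (auto simp: w_def supp_def)
  moreover have "w$i0 = 0" "0 < u$i0" using i0 pos[OF i0(1)] by (simp_all add: w_def)
  ultimately have "supp w \<subset> supp u" unfolding supp_def by force
  moreover have "w \<bullet> (A *v w) = 0"
    unfolding w_def by (rule copositive_zero_line[OF cop zu zv]) (simp add: s)
  ultimately have "w = 0" using minu w_nonneg unfolding is_zero_def by blast
  then have "u = t *\<^sub>R v" by (simp add: w_def algebra_simps)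
  then show ?thesis by blast
qed

lemma zero_supp_card_ge_2:
  fixes A :: "real^'n^'n"
  assumes cop: "copositive A" and diag: "\<forall>i. 0 < A$i$i" and z: "is_zero A u"
  shows "2 \<le> card (supp u)"
proof (rule ccontr)
  assume "\<not> 2 \<le> card (supp u)"
  moreover have "card (supp u) \<noteq> 0" using zero_supp_nonempty[OF z] by simp
  ultimately have "card (supp u) = 1" by linarith
  then obtain i where i: "supp u = {i}" by (auto simp: card_1_singleton_iff)
  then have "(A *v u)$i = A$i$i * u$i" using matrix_vector_supp[of u "{i}" A i] by simp
  moreover have "u$i \<noteq> 0" "(A *v u)$i = 0"
    using i copositive_zero_gradient_vanishes[OF cop z, of i] by (auto simp: supp_def)
  ultimately show False using diag[rule_format, of i] by simp
qed

(* With unit diagonal, a zero supported on two indices i, j satisfies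
   u_i + a u_j = 0 = a u_i + u_j with a = A_ij, which forces u_i = u_j. *)
lemma zero_supp_card_2_equal_entries:
  fixes A :: "real^'n^'n"
  assumes cop: "copositive A" and diag: "\<forall>i. A$i$i = 1" and z: "is_zero A u"
    and s: "supp u = {i, j}" and ij: "i \<noteq> j"
  shows "u$i = u$j"
proof -
  have "transpose A = A" using cop unfolding copositive_def by blast
  then have sym: "A$j$i = A$i$j" by (metis transpose_def vec_lambda_beta)
  have "(A *v u)$i = A$i$i * u$i + A$i$j * u$j" "(A *v u)$j = A$j$i * u$i + A$j$j * u$j"
    using matrix_vector_supp[of u "{i,j}" A] s ij by simp_all
  moreover have "(A *v u)$i = 0" "(A *v u)$j = 0"
    using copositive_zero_gradient_vanishes[OF cop z] s by auto
  ultimately have e1: "u$i + A$i$j * u$j = 0" and e2: "A$i$j * u$i + u$j = 0"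
    using diag sym by simp_all
  have pos: "0 < u$i" "0 < u$j" using zero_pos_on_supp[OF z] s by auto
  have "(u$i - u$j) * (1 - A$i$j) = 0" using e1 e2 by (simp add: algebra_simps)
  moreover have "A$i$j \<noteq> 1" using e1 pos by auto
  ultimately show ?thesis by simp
qed

lemma G2_adj_sym: "G2_adj I i j \<longleftrightarrow> G2_adj I j i"
  unfolding G2_adj_def by (simp add: insert_commute)

lemma G2_component_self: "v \<in> G2_component I v"
  unfolding G2_component_def by simp

lemma G2_component_adj_closed:
  assumes "i \<in> G2_component I v" "G2_adj I i j"
  shows "j \<in> G2_component I v"
proof -
  have "(G2_adj I)\<^sup>*\<^sup>* v i" using assms(1) by (simp add: G2_component_def)
  then have "(G2_adj I)\<^sup>*\<^sup>* v j" using assms(2) by (rule rtranclp.rtrancl_into_rtrancl)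
  then show ?thesis by (simp add: G2_component_def)
qed

lemma G2_component_adj_iff:
  assumes "G2_adj I i j"
  shows "i \<in> G2_component I v \<longleftrightarrow> j \<in> G2_component I v"
  using assms G2_adj_sym[of I i j] G2_component_adj_closed by metis

lemma G2_component_eq:
  assumes "x \<in> G2_component I v"
  shows "G2_component I x = G2_component I v"
proof -
  have "symp (G2_adj I)" using G2_adj_sym by (metis sympI)
  then have "symp (G2_adj I)\<^sup>*\<^sup>*" by (rule symp_rtranclp)
  moreover have vx: "(G2_adj I)\<^sup>*\<^sup>* v x" using assms unfolding G2_component_def by simp
  ultimately have xv: "(G2_adj I)\<^sup>*\<^sup>* x v" by (rule sympD)
  show ?thesis unfolding G2_component_def
    using rtranclp_trans[OF xv] rtranclp_trans[OF vx] by blast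
qed

lemma G2_components_disjoint:
  assumes "C \<in> G2_components I" "D \<in> G2_components I" "C \<noteq> D"
  shows "C \<inter> D = {}"
proof (rule ccontr)
  assume "C \<inter> D \<noteq> {}"
  then obtain x where "x \<in> C" "x \<in> D" by blast
  moreover obtain v w where "C = G2_component I v" "D = G2_component I w"
    using assms(1,2) unfolding G2_components_def by blast
  ultimately have "C = G2_component I x" "D = G2_component I x" using G2_component_eq by metis+
  then show False using assms(3) by simp
qed

definition G2_colouring :: "'n set set \<Rightarrow> 'n set \<Rightarrow> 'n \<Rightarrow> bool" where
  "G2_colouring I C = (SOME c. \<forall>i\<in>C. \<forall>j\<in>C. G2_adj I i j \<longrightarrow> c i \<noteq> c j)"

lemma G2_colouring_proper:
  fixes I :: "'n set set"
  assumes "G2_bipartite I C" "i \<in> C" "j \<in> C" "G2_adj I i j"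
  shows "G2_colouring I C i \<noteq> G2_colouring I C j"
proof -
  obtain c :: "'n \<Rightarrow> bool" where "\<forall>i\<in>C. \<forall>j\<in>C. G2_adj I i j \<longrightarrow> c i \<noteq> c j"
    using assms(1) unfolding G2_bipartite_def by blast
  then have "\<forall>i\<in>C. \<forall>j\<in>C. G2_adj I i j \<longrightarrow> G2_colouring I C i \<noteq> G2_colouring I C j"
    unfolding G2_colouring_def
    by (rule someI[where P = "\<lambda>c. \<forall>i\<in>C. \<forall>j\<in>C. G2_adj I i j \<longrightarrow> c i \<noteq> c j"])
  then show ?thesis using assms(2-4) by blast
qed

definition colouring_vector :: "'n set set \<Rightarrow> 'n set \<Rightarrow> real^'n" where
  "colouring_vector I C = (\<chi> i. if i \<in> C then (if G2_colouring I C i then 1 else -1) else 0)"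

lemma supp_colouring_vector: "supp (colouring_vector I C) = C"
  unfolding colouring_vector_def supp_def by auto

lemma colouring_vector_edge:
  assumes "G2_bipartite I C" "i \<in> C" "j \<in> C" "G2_adj I i j"
  shows "colouring_vector I C $ i + colouring_vector I C $ j = 0"
  using G2_colouring_proper[OF assms] assms(2,3) unfolding colouring_vector_def by auto

(* The colouring vector of a bipartite component is orthogonal to every vector with
   equal entries on the two ends of an edge of G_2 and zero elsewhere: either the edge
   lies in C and the entries cancel, or it lies outside C. *)
lemma colouring_vector_orthogonal_edge_vector:
  fixes u :: "real^'n"
  assumes C: "C \<in> G2_bipartite_components I" and adj: "G2_adj I i j"
    and s: "supp u = {i, j}" and eq: "u$i = u$j"
  shows "colouring_vector I C \<bullet> u = 0"
proof -
  let ?z = "colouring_vector I C"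
  obtain v where v: "C = G2_component I v" and bip: "G2_bipartite I C"
    using C unfolding G2_bipartite_components_def G2_components_def by auto
  have ij: "i \<noteq> j" using adj unfolding G2_adj_def by auto
  show ?thesis
  proof (cases "i \<in> C")
    case True
    then have "j \<in> C" using G2_component_adj_iff[OF adj] v by blast
    have "?z \<bullet> u = ?z$i * u$i + ?z$j * u$j" using inner_supp[of u "{i, j}" ?z] s ij by simp
    also have "\<dots> = (?z$i + ?z$j) * u$j" using eq by (simp add: algebra_simps)
    also have "\<dots> = 0" using colouring_vector_edge[OF bip True \<open>j \<in> C\<close> adj] by simp
    finally show ?thesis .
  next
    case False
    then have "j \<notin> C" using G2_component_adj_iff[OF adj] v by blast
    then show ?thesis using False s by (intro inner_disjoint_supp) (auto simp: supp_colouring_vector)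
  qed
qed

(* Colouring vectors of distinct components have disjoint nonempty supports, so they
   are pairwise orthogonal, nonzero, hence linearly independent. *)
lemma colouring_vectors_independent:
  assumes "S \<subseteq> G2_components I"
  shows "independent (colouring_vector I ` S)" "card (colouring_vector I ` S) = card S"
proof -
  have "pairwise orthogonal (colouring_vector I ` S)"
  proof (rule pairwise_imageI)
    fix C D assume "C \<in> S" "D \<in> S" "C \<noteq> D"
    then have "C \<inter> D = {}" using assms G2_components_disjoint by blast
    then show "orthogonal (colouring_vector I C) (colouring_vector I D)"
      unfolding orthogonal_def by (intro inner_disjoint_supp) (simp add: supp_colouring_vector)
  qed
  moreover have "colouring_vector I C \<noteq> 0" if C: "C \<in> S" for C
  proof -
    obtain v where "C = G2_component I v" using C assms unfolding G2_components_def by blast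
    then have "v \<in> supp (colouring_vector I C)"
      using G2_component_self by (simp add: supp_colouring_vector)
    then show ?thesis by (auto simp: supp_def)
  qed
  then have "0 \<notin> colouring_vector I ` S" by auto
  ultimately show "independent (colouring_vector I ` S)" by (rule pairwise_orthogonal_independent)
  have "inj_on (colouring_vector I) S" by (metis inj_onI supp_colouring_vector)
  then show "card (colouring_vector I ` S) = card S" by (rule card_image)
qed

(* Since minimal zeros with a common support are proportional, the minimal zeros whose
   support lies in a set M of supports can be replaced by at most card M
   representatives without changing the span. *)
lemma minimal_zeros_span_reduction:
  fixes A :: "real^'n^'n"
  assumes cop: "copositive A" and span: "span (minimal_zeros A) = UNIV"
  shows "\<exists>R. finite R \<and> card R \<le> card M \<and>
           span ({u \<in> minimal_zeros A. supp u \<notin> M} \<union> R) = UNIV"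
proof -
  define r where "r J = (SOME u. u \<in> minimal_zeros A \<and> supp u = J)" for J
  let ?U = "{u \<in> minimal_zeros A. supp u \<notin> M}"
  have rep: "r (supp u) \<in> minimal_zeros A \<and> supp (r (supp u)) = supp u"
    if u: "u \<in> minimal_zeros A" for u
    unfolding r_def
    by (rule someI[where P = "\<lambda>v. v \<in> minimal_zeros A \<and> supp v = supp u" and x = u]) (simp add: u)
  have covered: "u \<in> span (?U \<union> r ` M)" if u: "u \<in> minimal_zeros A" for u
  proof (cases "supp u \<in> M")
    case True
    have "supp u = supp (r (supp u))" using rep[OF u] by simp
    then obtain t where t: "u = t *\<^sub>R r (supp u)"
      using minimal_zeros_same_supp_parallel[OF cop u conjunct1[OF rep[OF u]]] by blast
    have "r (supp u) \<in> span (?U \<union> r ` M)" using True by (intro span_base) blast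
    then have "t *\<^sub>R r (supp u) \<in> span (?U \<union> r ` M)" by (rule span_mul)
    then show ?thesis using t by metis
  next
    case False
    then show ?thesis using u by (intro span_base) blast
  qed
  have "span (minimal_zeros A) \<subseteq> span (?U \<union> r ` M)"
    using covered by (intro span_minimal subsetI subspace_span)
  then have "span (?U \<union> r ` M) = UNIV" using span by (simp add: top_unique)
  moreover have "finite (r ` M)" "card (r ` M) \<le> card M" by (simp_all add: card_image_le)
  ultimately show ?thesis by blast
qed

(* The neighbours of a component C in the bipartite graph G_{>2}: the supports of
   cardinality greater than 2 meeting C. *)
definition large_support_neighbours :: "'n set set \<Rightarrow> 'n set \<Rightarrow> 'n set set" where
  "large_support_neighbours I C = {J \<in> I. 2 < card J \<and> J \<inter> C \<noteq> {}}"

(* The colouring vector of a bipartite component C is orthogonal to every minimal zero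
   whose support is not a neighbour of C in G_{>2}: supports of size 2 are edges of G_2,
   and larger supports avoid C. *)
lemma colouring_vector_orthogonal_minimal_zero:
  fixes A :: "real^'n^'n"
  assumes cop: "copositive A" and diag: "\<forall>i. A$i$i = 1"
    and C: "C \<in> G2_bipartite_components (supp_minimal_zeros A)"
    and u: "u \<in> minimal_zeros A"
    and far: "supp u \<notin> large_support_neighbours (supp_minimal_zeros A) C"
  shows "colouring_vector (supp_minimal_zeros A) C \<bullet> u = 0"
proof -
  have z: "is_zero A u" using u unfolding minimal_zeros_def by blast
  have I: "supp u \<in> supp_minimal_zeros A" using u unfolding supp_minimal_zeros_def by blast
  have "2 \<le> card (supp u)" using zero_supp_card_ge_2[OF cop _ z] diag by simp
  then consider "card (supp u) = 2" | "2 < card (supp u)" by linarith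
  then show ?thesis
  proof cases
    case 1
    then obtain i j where ij: "supp u = {i, j}" "i \<noteq> j" by (auto simp: card_2_iff)
    have "G2_adj (supp_minimal_zeros A) i j" using I ij 1 unfolding G2_adj_def by simp
    moreover have "u$i = u$j" by (rule zero_supp_card_2_equal_entries[OF cop diag z ij])
    ultimately show ?thesis using colouring_vector_orthogonal_edge_vector[OF C _ ij(1)] by blast
  next
    case 2
    then have "C \<inter> supp u = {}" using far I unfolding large_support_neighbours_def by blast
    then show ?thesis by (intro inner_disjoint_supp) (simp add: supp_colouring_vector)
  qed
qed

(* For a set S of components with neighbourhood M, the minimal zeros with support
   outside M, plus at most card M representatives, span the space; the card S
   independent colouring vectors of S are orthogonal to the former, so
   card S <= card M. *)
lemma hall_condition_bipartite_components:
  fixes A :: "real^'n^'n"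
  assumes cop: "copositive A" and diag: "\<forall>i. A$i$i = 1"
    and span: "span (minimal_zeros A) = UNIV"
  shows "hall_condition (G2_bipartite_components (supp_minimal_zeros A))
           (large_support_neighbours (supp_minimal_zeros A))"
  unfolding hall_condition_def
proof (intro allI impI)
  let ?I = "supp_minimal_zeros A"
  fix S assume S: "S \<subseteq> G2_bipartite_components ?I"
  let ?M = "\<Union>(large_support_neighbours ?I ` S)"
  obtain R where R: "finite R" "card R \<le> card ?M"
    "span ({u \<in> minimal_zeros A. supp u \<notin> ?M} \<union> R) = UNIV"
    using minimal_zeros_span_reduction[OF cop span] by blast
  have comps: "S \<subseteq> G2_components ?I" using S unfolding G2_bipartite_components_def by blast
  have "card (colouring_vector ?I ` S) \<le> card R"
  proof (rule card_independent_orthogonal_le[OF R(3) R(1) colouring_vectors_independent(1)[OF comps]])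
    fix z u assume "z \<in> colouring_vector ?I ` S" and u: "u \<in> {u \<in> minimal_zeros A. supp u \<notin> ?M}"
    then obtain C where "C \<in> S" "z = colouring_vector ?I C" by blast
    then show "orthogonal z u"
      using colouring_vector_orthogonal_minimal_zero[OF cop diag, of C u] S u
      unfolding orthogonal_def by blast
  qed
  then show "card S \<le> card ?M" using colouring_vectors_independent(2)[OF comps] R(2) by linarith
qed

theorem lemma5p2:
  fixes A :: "real^'n^'n"
  assumes "copositive A"
    and "\<forall>i. A$i$i = 1"
    and "span (minimal_zeros A) = UNIV"
  shows "\<exists>w :: 'n set \<Rightarrow> 'n set.
           inj_on w (G2_bipartite_components (supp_minimal_zeros A)) \<and>
           (\<forall>C \<in> G2_bipartite_components (supp_minimal_zeros A).
              w C \<in> supp_minimal_zeros A \<and> card (w C) > 2 \<and> (\<exists>v \<in> C. v \<in> w C))"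
proof -
  let ?I = "supp_minimal_zeros A"
  let ?K = "G2_bipartite_components ?I"
  have "hall_condition ?K (large_support_neighbours ?I)"
    by (rule hall_condition_bipartite_components[OF assms])
  then obtain w where "inj_on w ?K" "\<forall>C\<in>?K. w C \<in> large_support_neighbours ?I C"
    using hall_marriage[of ?K "large_support_neighbours ?I"] by auto
  then show ?thesis unfolding large_support_neighbours_def by blast
qed

end
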